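(* Let $X$ be a complex torus of dimension $g$, with $\omega \in \mathrm{H}^2(X, \mathbf{Z}/n)$. Suppose that $e_1, \dots, e_{2g}$ is a basis for $\mathrm{H}^1(X, \mathbf{Z})$ such that \[ \omega = \sum_{i = 1}^r a_i e_{i} \wedge e_{i + g}, \] for $0 \neq a_i \in \mathbf{Z}/n$ and $0 \leq r \leq g$. Then \[ \mathrm{Ann}(\omega) = \prod_{i = 1}^r \mathrm{Ann}_{\mathbf{Z}}(a_i). \]
   Context: $\mathrm{Ann}(\omega)$ is the least degree of a finite isogeny $f:X' \to X$ such that $f^*\omega = 0$. For $a \in \mathbf{Z}/n$, $\mathrm{Ann}_{\mathbf{Z}}(a)$ is the positive generator of the annihilator ideal of $a$ in $\mathbf{Z}$. *)

theory Defs
  imports "HOL-Number_Theory.Cong"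
begin

text \<open>Model: X = C^g / Lambda with Lambda = Z^(2g), vectors of Z^d are functions
 nat => int supported on {..<d}.  H^1(X,Z) = Hom(Lambda,Z); H^2(X,Z/n) = alternating
 Z/n-valued forms on Lambda.  A finite isogeny X' -> X is V/Lambda' -> V/Lambda for a
 finite-index sublattice Lambda' of Lambda; its degree is the index, and pullback
 is restriction of forms to Lambda'.\<close>

definition ZV :: "nat \<Rightarrow> (nat \<Rightarrow> int) set" where
  "ZV d = {x. \<forall>j\<ge>d. x j = 0}"

definition sublattice :: "nat \<Rightarrow> (nat \<Rightarrow> int) set \<Rightarrow> bool" where
  "sublattice d L \<longleftrightarrow> L \<subseteq> ZV d \<and> (\<lambda>_. 0) \<in> L \<and>
     (\<forall>x\<in>L. \<forall>y\<in>L. (\<lambda>j. x j + y j) \<in> L) \<and> (\<forall>x\<in>L. (\<lambda>j. - x j) \<in> L)"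

definition lattice_cosets :: "nat \<Rightarrow> (nat \<Rightarrow> int) set \<Rightarrow> (nat \<Rightarrow> int) set set" where
  "lattice_cosets d L = (\<lambda>v. (\<lambda>x. (\<lambda>j. v j + x j)) ` L) ` ZV d"

definition finite_index_sublattice :: "nat \<Rightarrow> (nat \<Rightarrow> int) set \<Rightarrow> bool" where
  "finite_index_sublattice d L \<longleftrightarrow> sublattice d L \<and> finite (lattice_cosets d L)"

definition lattice_index :: "nat \<Rightarrow> (nat \<Rightarrow> int) set \<Rightarrow> nat" where
  "lattice_index d L = card (lattice_cosets d L)"

text \<open>Ann(omega): least degree of a finite isogeny killing omega (omega a Z/n-valued
  form on Z^d, values represented by integers modulo n).\<close>
definition Ann_form :: "nat \<Rightarrow> nat \<Rightarrow> ((nat \<Rightarrow> int) \<Rightarrow> (nat \<Rightarrow> int) \<Rightarrow> int) \<Rightarrow> nat" where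
  "Ann_form n d \<omega> = (LEAST m. \<exists>L. finite_index_sublattice d L \<and> lattice_index d L = m \<and>
       (\<forall>x\<in>L. \<forall>y\<in>L. [\<omega> x y = 0] (mod int n)))"

definition Ann_Z :: "nat \<Rightarrow> int \<Rightarrow> nat" where
  "Ann_Z n a = (LEAST m. m > 0 \<and> [int m * a = 0] (mod int n))"

definition lin_fun :: "nat \<Rightarrow> (nat \<Rightarrow> nat \<Rightarrow> int) \<Rightarrow> nat \<Rightarrow> (nat \<Rightarrow> int) \<Rightarrow> int" where
  "lin_fun d E i x = (\<Sum>j<d. E i j * x j)"

text \<open>e_0,...,e_(d-1) (rows of E) form a Z-basis of Hom(Z^d,Z).\<close>
definition dual_basis :: "nat \<Rightarrow> (nat \<Rightarrow> nat \<Rightarrow> int) \<Rightarrow> bool" where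
  "dual_basis d E \<longleftrightarrow>
     bij_betw (\<lambda>x i. if i < d then lin_fun d E i x else 0) (ZV d) (ZV d)"

end

theory Submission
  imports Defs "HOL-Probability.Product_PMF"
begin

(* Write m_i = Ann_Z(a_i), so that n divides a_i x iff m_i divides x.

   Upper bound: the sublattice of all x with m_i | e_i(x) for i < r kills omega, and its index is
   at most prod m_i because a coset is determined by the residues e_i(x) mod m_i.

   Lower bound: let L be a sublattice of finite index killing omega.  The map
   phi x = ((e_i(x) mod m_i)_i, (e_(i+g)(x) mod m_i)_i) sends Z^2g onto G = prod_i (Z/m_i)^2, so
   [Z^2g : L] >= |G| / |phi(L)|.  Moreover |phi(L)| <= |S| |T|, where S is the first component of
   phi(L) and T the second component of phi(x) for those x in L whose first component vanishes.
   As omega vanishes on L, S and T are orthogonal for the pairing sum_i a_i s_i t_i with values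
   in Z/n, which is nondegenerate on prod_i Z/m_i; by induction on the number of factors, starting
   from the cyclic case, orthogonal subgroups satisfy |S| |T| <= prod m_i.  Hence
   [Z^2g : L] >= (prod m_i)^2 / prod m_i. *)

definition residues :: "nat \<Rightarrow> (nat \<Rightarrow> nat) \<Rightarrow> (nat \<Rightarrow> int) set" where
  "residues k m = PiE_dflt {..<k} 0 (\<lambda>i. {0..<int (m i)})"

definition residue_add :: "(nat \<Rightarrow> nat) \<Rightarrow> (nat \<Rightarrow> int) \<Rightarrow> (nat \<Rightarrow> int) \<Rightarrow> nat \<Rightarrow> int" where
  "residue_add m x y = (\<lambda>i. (x i + y i) mod int (m i))"

definition residue_diff :: "(nat \<Rightarrow> nat) \<Rightarrow> (nat \<Rightarrow> int) \<Rightarrow> (nat \<Rightarrow> int) \<Rightarrow> nat \<Rightarrow> int" where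
  "residue_diff m x y = (\<lambda>i. (x i - y i) mod int (m i))"

(* Only closure under differences is required, so the empty set qualifies; this is harmless for
   the cardinality bounds. *)
definition residue_subgroup :: "nat \<Rightarrow> (nat \<Rightarrow> nat) \<Rightarrow> (nat \<Rightarrow> int) set \<Rightarrow> bool" where
  "residue_subgroup k m S \<longleftrightarrow> S \<subseteq> residues k m \<and> (\<forall>x\<in>S. \<forall>y\<in>S. residue_diff m x y \<in> S)"

lemma residues_iff:
  "x \<in> residues k m \<longleftrightarrow> (\<forall>i<k. 0 \<le> x i \<and> x i < int (m i)) \<and> (\<forall>i\<ge>k. x i = 0)"
  unfolding residues_def PiE_dflt_def by (simp add: not_less all_conj_distrib)

lemma finite_residues: "finite (residues k m)"
  unfolding residues_def by auto

lemma card_residues: "card (residues k m) = (\<Prod>i<k. m i)"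
  unfolding residues_def by (simp add: card_PiE_dflt)

lemma residues_coord_eq:
  assumes "x \<in> residues k m" "x' \<in> residues k m"
    and "(x i - c) mod int (m i) = (x' i - c) mod int (m i)"
  shows "x i = x' i"
proof (cases "i < k")
  case True
  have "(x i - c + c) mod int (m i) = (x' i - c + c) mod int (m i)"
    using assms(3) by (rule mod_add_cong) simp
  then show ?thesis
    using assms(1,2) True by (simp add: residues_iff)
next
  case False
  then show ?thesis
    using assms(1,2) by (simp add: residues_iff)
qed

lemma inj_on_residue_diff: "inj_on (\<lambda>x. residue_diff m x y) (residues k m)"
proof (rule inj_onI)
  fix x x' assume x: "x \<in> residues k m" "x' \<in> residues k m"
    and eq: "residue_diff m x y = residue_diff m x' y"
  show "x = x'"
  proof
    fix i
    show "x i = x' i"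
      using x fun_cong[OF eq, of i]
      by (intro residues_coord_eq[of x k m x' i "y i"]) (simp_all add: residue_diff_def)
  qed
qed

lemma residue_diff_self: "residue_diff m x x = (\<lambda>_. 0)"
  by (simp add: residue_diff_def)

lemma residues_SucD:
  assumes "x \<in> residues (Suc k) m"
  shows "x(k := 0) \<in> residues k m" and "0 \<le> x k" and "x k < int (m k)"
proof -
  show "x(k := 0) \<in> residues k m"
    unfolding residues_iff
  proof (intro conjI allI impI)
    fix i assume "i < k"
    then show "0 \<le> (x(k := 0)) i" "(x(k := 0)) i < int (m i)"
      using assms by (simp_all add: residues_iff)
  next
    fix i assume "k \<le> i"
    then show "(x(k := 0)) i = 0"
      using assms by (cases "i = k") (simp_all add: residues_iff)
  qed
  show "0 \<le> x k" "x k < int (m k)"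
    using assms by (simp_all add: residues_iff)
qed

lemma residue_subgroup_coord_kernel:
  assumes "residue_subgroup (Suc k) m S"
  shows "residue_subgroup k m {x \<in> S. x k = 0}"
proof -
  have "x \<in> residues k m" if "x \<in> S" "x k = 0" for x
  proof -
    have "x \<in> residues (Suc k) m"
      using that(1) assms unfolding residue_subgroup_def by blast
    then have "x(k := 0) \<in> residues k m"
      by (rule residues_SucD)
    then show ?thesis
      using that(2) by (simp add: fun_upd_idem)
  qed
  then show ?thesis
    using assms unfolding residue_subgroup_def by (auto simp: residue_diff_def)
qed

lemma residue_subgroup_truncate:
  assumes "residue_subgroup (Suc k) m T"
  shows "residue_subgroup k m ((\<lambda>y. y(k := 0)) ` T)"
proof -
  have "y(k := 0) \<in> residues k m" if "y \<in> T" for y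
  proof -
    have "y \<in> residues (Suc k) m"
      using that assms unfolding residue_subgroup_def by blast
    then show ?thesis
      by (rule residues_SucD)
  qed
  moreover have "residue_diff m (x(k := 0)) (y(k := 0)) = (residue_diff m x y)(k := 0)" for x y
    by (simp add: residue_diff_def fun_eq_iff)
  ultimately show ?thesis
    using assms unfolding residue_subgroup_def by auto
qed

lemma card_le_card_image_mult:
  assumes "finite A" "finite K"
    and into: "\<And>x y. x \<in> A \<Longrightarrow> y \<in> A \<Longrightarrow> p x = p y \<Longrightarrow> \<delta> x y \<in> K"
    and inj: "\<And>y. y \<in> A \<Longrightarrow> inj_on (\<lambda>x. \<delta> x y) {x \<in> A. p x = p y}"
  shows "card A \<le> card (p ` A) * card K"
proof -
  have fiber: "card {x \<in> A. p x = c} \<le> card K" if "c \<in> p ` A" for c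
  proof -
    from that obtain y where y: "y \<in> A" "c = p y" by blast
    show ?thesis
      unfolding y(2) by (rule card_inj_on_le[OF inj[OF y(1)]]) (use assms(2) into y(1) in auto)
  qed
  have "A = (\<Union>c \<in> p ` A. {x \<in> A. p x = c})" by blast
  then have "card A \<le> (\<Sum>c \<in> p ` A. card {x \<in> A. p x = c})"
    by (metis card_UN_le assms(1) finite_imageI)
  also have "\<dots> \<le> card (p ` A) * card K"
    using sum_bounded_above[of "p ` A", OF fiber] by simp
  finally show ?thesis .
qed

lemma card_multiples_le:
  fixes q c :: int
  assumes "q > 0" "S \<subseteq> {0..<q * c}" "\<forall>s\<in>S. q dvd s"
  shows "card S \<le> nat c"
proof -
  have "S \<subseteq> (\<lambda>j. q * j) ` {0..<c}"
  proof
    fix s assume "s \<in> S"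
    moreover from this assms(3) obtain j where "s = q * j"
      by (meson dvdE)
    ultimately have "0 \<le> q * j" "q * j < q * c" "s = q * j"
      using assms(2) by auto
    then show "s \<in> (\<lambda>j. q * j) ` {0..<c}"
      using assms(1) by (auto simp: zero_le_mult_iff)
  qed
  then have "card S \<le> card ((\<lambda>j. q * j) ` {0..<c})"
    by (intro card_mono) simp_all
  also have "\<dots> \<le> card {0..<c}"
    by (rule card_image_le) simp
  finally show ?thesis by simp
qed

lemma card_mult_card_le_if_dvd_mult:
  fixes M :: int
  assumes S: "S \<subseteq> {0..<M}" and T: "T \<subseteq> {0..<M}" and dvd: "\<forall>s\<in>S. \<forall>t\<in>T. M dvd s * t"
  shows "card S * card T \<le> nat M"
proof (cases "M > 0")
  case False
  then show ?thesis using S by auto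
next
  case True
  define G where "G = Gcd (insert M S)"
  have "G dvd M" "\<forall>s\<in>S. G dvd s"
    unfolding G_def by (blast intro: Gcd_dvd)+
  moreover have "G \<ge> 0"
    unfolding G_def by (rule Gcd_int_greater_eq_0)
  ultimately have "G > 0"
    using True by (metis dvd_0_left_iff order_less_le)
  define q where "q = M div G"
  have M: "M = G * q"
    using \<open>G dvd M\<close> unfolding q_def by simp
  with True \<open>G > 0\<close> have "q > 0"
    by (simp add: zero_less_mult_iff)
  have "card S \<le> nat q"
    by (rule card_multiples_le[of G]) (use \<open>G > 0\<close> S M \<open>\<forall>s\<in>S. G dvd s\<close> in auto)
  moreover have "q dvd t" if "t \<in> T" for t
  proof -
    \<comment> \<open>M divides s * t for all s in S and for s = M, hence also Gcd (insert M S) * t\<close>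
    have "M dvd Gcd ((*) t ` insert M S)"
      using dvd that by (auto simp: dvd_Gcd_iff mult.commute)
    also have "Gcd ((*) t ` insert M S) = normalize (t * G)"
      unfolding G_def by (rule Gcd_mult)
    finally have "G * q dvd G * t"
      using M by (simp add: mult.commute)
    then show ?thesis
      using \<open>G > 0\<close> by simp
  qed
  then have "card T \<le> nat G"
    by (intro card_multiples_le[of q]) (use \<open>q > 0\<close> T M in \<open>auto simp: mult.commute\<close>)
  ultimately have "card S * card T \<le> nat q * nat G"
    by (rule mult_mono) simp_all
  also have "\<dots> = nat M"
    using M \<open>G > 0\<close> \<open>q > 0\<close> by (simp add: nat_mult_distrib[symmetric] mult.commute)
  finally show ?thesis .
qed

lemma card_residue_subgroup_le_coord:
  assumes "residue_subgroup (Suc k) m S"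
  shows "card S \<le> card ((\<lambda>x. x k) ` S) * card {x \<in> S. x k = 0}"
proof -
  have S: "S \<subseteq> residues (Suc k) m" "\<And>x y. x \<in> S \<Longrightarrow> y \<in> S \<Longrightarrow> residue_diff m x y \<in> S"
    using assms unfolding residue_subgroup_def by auto
  show ?thesis
  proof (rule card_le_card_image_mult[where \<delta> = "residue_diff m"])
    show "inj_on (\<lambda>x. residue_diff m x y) {x \<in> S. x k = y k}" for y
      by (rule inj_on_subset[OF inj_on_residue_diff]) (use S(1) in auto)
  qed (use S finite_subset[OF S(1) finite_residues] in \<open>auto simp: residue_diff_def\<close>)
qed

lemma card_residue_subgroup_le_truncate:
  assumes "residue_subgroup (Suc k) m T"
  shows "card T \<le> card ((\<lambda>y. y(k := 0)) ` T) * card ((\<lambda>y. y k) ` {y \<in> T. \<forall>i<k. y i = 0})"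
proof -
  have T: "T \<subseteq> residues (Suc k) m" "\<And>x y. x \<in> T \<Longrightarrow> y \<in> T \<Longrightarrow> residue_diff m x y \<in> T"
    using assms unfolding residue_subgroup_def by auto
  show ?thesis
  proof (rule card_le_card_image_mult[where \<delta> = "\<lambda>y y'. residue_diff m y y' k"])
    show "residue_diff m y y' k \<in> (\<lambda>y. y k) ` {y \<in> T. \<forall>i<k. y i = 0}"
      if y: "y \<in> T" "y' \<in> T" and eq: "y(k := 0) = y'(k := 0)" for y y'
    proof -
      have "residue_diff m y y' i = 0" if "i < k" for i
        using fun_cong[OF eq, of i] that by (simp add: residue_diff_def)
      then show ?thesis
        using T(2)[OF y] by blast
    qed
    show "inj_on (\<lambda>y. residue_diff m y y' k) {y \<in> T. y(k := 0) = y'(k := 0)}" for y'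
    proof (rule inj_onI)
      fix y z
      assume y: "y \<in> {y \<in> T. y(k := 0) = y'(k := 0)}" and z: "z \<in> {y \<in> T. y(k := 0) = y'(k := 0)}"
        and eq: "residue_diff m y y' k = residue_diff m z y' k"
      have "y k = z k"
        using y z T(1) eq
        by (intro residues_coord_eq[of y "Suc k" m z k "y' k"]) (auto simp: residue_diff_def)
      moreover have "y(k := 0) = z(k := 0)"
        using y z by simp
      ultimately show "y = z"
        by (metis fun_upd_triv fun_upd_upd)
    qed
  qed (use finite_subset[OF T(1) finite_residues] in auto)
qed

lemma card_mult_card_le_if_orthogonal:
  assumes "\<And>i x. i < k \<Longrightarrow> int n dvd a i * x \<Longrightarrow> int (m i) dvd x"
    and "residue_subgroup k m S" and "residue_subgroup k m T"
    and "\<forall>x\<in>S. \<forall>y\<in>T. int n dvd (\<Sum>i<k. a i * x i * y i)"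
  shows "card S * card T \<le> (\<Prod>i<k. m i)"
  using assms
proof (induction k arbitrary: S T)
  case 0
  have "residues 0 m = {\<lambda>_. 0}"
    by (auto simp: residues_iff)
  then have "S \<subseteq> {\<lambda>_. 0}" "T \<subseteq> {\<lambda>_. 0}"
    using "0.prems"(2,3) unfolding residue_subgroup_def by simp_all
  then show ?case
    by (auto dest!: subset_singletonD)
next
  case (Suc k)
  note nondeg = Suc.prems(1) and orth = Suc.prems(4)
  define S0 where "S0 = {x \<in> S. x k = 0}"
  define S1 where "S1 = (\<lambda>x. x k) ` S"
  define T' where "T' = (\<lambda>y. y(k := 0)) ` T"
  define T1 where "T1 = (\<lambda>y. y k) ` {y \<in> T. \<forall>i<k. y i = 0}"
  have IH: "card S0 * card T' \<le> (\<Prod>i<k. m i)"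
  proof (rule Suc.IH)
    show "residue_subgroup k m S0" "residue_subgroup k m T'"
      unfolding S0_def T'_def using Suc.prems(2,3)
      by (simp_all add: residue_subgroup_coord_kernel residue_subgroup_truncate)
    have "int n dvd (\<Sum>i<k. a i * x i * (y(k := 0)) i)" if "x \<in> S" "x k = 0" "y \<in> T" for x y
    proof -
      have "(\<Sum>i<k. a i * x i * (y(k := 0)) i) = (\<Sum>i<k. a i * x i * y i)"
        by (rule sum.cong) simp_all
      also have "\<dots> = (\<Sum>i<Suc k. a i * x i * y i)"
        using that(2) by simp
      also have "int n dvd \<dots>"
        using orth that(1,3) by blast
      finally show ?thesis .
    qed
    then show "\<forall>x\<in>S0. \<forall>y\<in>T'. int n dvd (\<Sum>i<k. a i * x i * y i)"
      unfolding S0_def T'_def by blast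
  qed (use nondeg in simp)
  have cyclic: "card S1 * card T1 \<le> m k"
  proof -
    have "int (m k) dvd x k * y k" if "x \<in> S" "y \<in> T" "\<forall>i<k. y i = 0" for x y
    proof -
      have "(\<Sum>i<k. a i * x i * y i) = 0"
        using that(3) by (intro sum.neutral) simp
      moreover have "int n dvd (\<Sum>i<Suc k. a i * x i * y i)"
        using orth that(1,2) by blast
      ultimately have "int n dvd a k * (x k * y k)"
        by (simp add: mult.assoc)
      then show ?thesis
        using nondeg by simp
    qed
    moreover have "S1 \<subseteq> {0..<int (m k)}" "T1 \<subseteq> {0..<int (m k)}"
      using Suc.prems(2,3) residues_SucD(2,3) unfolding S1_def T1_def residue_subgroup_def
      by fastforce+
    ultimately have "card S1 * card T1 \<le> nat (int (m k))"
      unfolding S1_def T1_def by (intro card_mult_card_le_if_dvd_mult) auto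
    then show ?thesis by simp
  qed
  have "card S * card T \<le> (card S1 * card S0) * (card T' * card T1)"
    unfolding S0_def S1_def T'_def T1_def using Suc.prems(2,3)
    by (intro mult_le_mono card_residue_subgroup_le_coord card_residue_subgroup_le_truncate)
  also have "\<dots> = (card S0 * card T') * (card S1 * card T1)"
    by (simp add: ac_simps)
  also have "\<dots> \<le> (\<Prod>i<k. m i) * m k"
    using IH cyclic by (rule mult_le_mono)
  finally show ?case by simp
qed

lemma Ann_Z_pos_dvd:
  assumes "n > 0"
  shows "Ann_Z n a > 0" and "int n dvd int (Ann_Z n a) * a"
proof -
  have "0 < Ann_Z n a \<and> [int (Ann_Z n a) * a = 0] (mod int n)"
    unfolding Ann_Z_def by (rule LeastI[of _ n]) (use assms in \<open>simp add: cong_0_iff\<close>)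
  then show "Ann_Z n a > 0" "int n dvd int (Ann_Z n a) * a"
    by (simp_all add: cong_0_iff)
qed

lemma Ann_Z_dvd_iff:
  assumes "n > 0"
  shows "int n dvd a * x \<longleftrightarrow> int (Ann_Z n a) dvd x"
proof -
  define m where "m = Ann_Z n a"
  have m: "m > 0" "int n dvd int m * a"
    unfolding m_def using Ann_Z_pos_dvd[OF assms] by simp_all
  have least: "m \<le> k" if "k > 0" "int n dvd int k * a" for k
    unfolding m_def Ann_Z_def using that by (intro Least_le) (simp add: cong_0_iff)
  show ?thesis
    unfolding m_def[symmetric]
  proof
    assume "int n dvd a * x"
    obtain u v where uv: "u * x + v * int m = gcd x (int m)"
      using bezout_int by blast
    have "gcd x (int m) * a = u * (a * x) + v * (int m * a)"
      by (simp flip: uv add: algebra_simps)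
    also have "int n dvd \<dots>"
      using \<open>int n dvd a * x\<close> m(2) by (simp add: dvd_add dvd_mult)
    finally have "int n dvd int (nat (gcd x (int m))) * a"
      by simp
    \<comment> \<open>by minimality of m, the positive divisor gcd x m of m must be m itself\<close>
    then have "m \<le> nat (gcd x (int m))"
      using m(1) by (intro least) simp_all
    then have "gcd x (int m) = int m"
      using m(1) gcd_le2_int[of "int m" x] by linarith
    then show "int m dvd x"
      using gcd_dvd1[of x "int m"] by simp
  next
    assume "int m dvd x"
    then obtain q where "x = int m * q" ..
    then have "a * x = (int m * a) * q"
      by (simp add: ac_simps)
    also have "int n dvd \<dots>"
      using m(2) by (rule dvd_mult2)
    finally show "int n dvd a * x" .
  qed
qed

lemma sublattice_add: "sublattice d L \<Longrightarrow> x \<in> L \<Longrightarrow> y \<in> L \<Longrightarrow> (\<lambda>j. x j + y j) \<in> L"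
  unfolding sublattice_def by blast

lemma sublattice_minus: "sublattice d L \<Longrightarrow> x \<in> L \<Longrightarrow> (\<lambda>j. - x j) \<in> L"
  unfolding sublattice_def by blast

lemma sublattice_diff:
  assumes "sublattice d L" "x \<in> L" "y \<in> L"
  shows "(\<lambda>j. x j - y j) \<in> L"
  using sublattice_add[OF assms(1,2) sublattice_minus[OF assms(1,3)]] by simp

lemma lattice_coset_eq:
  assumes L: "sublattice d L" and vw: "(\<lambda>j. v j - w j) \<in> L"
  shows "(\<lambda>x j. v j + x j) ` L = (\<lambda>x j. w j + x j) ` L"
proof -
  have sub: "(\<lambda>x j. v j + x j) ` L \<subseteq> (\<lambda>x j. w j + x j) ` L"
    if vw: "(\<lambda>j. v j - w j) \<in> L" for v w
  proof
    fix z assume "z \<in> (\<lambda>x j. v j + x j) ` L"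
    then obtain x where x: "x \<in> L" and z: "z = (\<lambda>j. v j + x j)" by blast
    show "z \<in> (\<lambda>x j. w j + x j) ` L"
    proof (rule image_eqI)
      show "z = (\<lambda>x j. w j + x j) (\<lambda>j. (v j - w j) + x j)"
        unfolding z by simp
      show "(\<lambda>j. (v j - w j) + x j) \<in> L"
        using sublattice_add[OF L vw x] by simp
    qed
  qed
  have wv: "(\<lambda>j. w j - v j) \<in> L"
    using sublattice_minus[OF L vw] by simp
  show ?thesis
    using sub[OF vw] sub[OF wv] by (rule equalityI)
qed

lemma lattice_index_le_card_image:
  assumes L: "sublattice d L" and fin: "finite (f ` ZV d)"
    and ker: "\<And>v w. v \<in> ZV d \<Longrightarrow> w \<in> ZV d \<Longrightarrow> f v = f w \<Longrightarrow> (\<lambda>j. v j - w j) \<in> L"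
  shows "finite (lattice_cosets d L)" and "lattice_index d L \<le> card (f ` ZV d)"
proof -
  define coset where "coset = (\<lambda>v::nat \<Rightarrow> int. (\<lambda>x j. v j + x j) ` L)"
  have "coset v = coset (inv_into (ZV d) f (f v))" if "v \<in> ZV d" for v
    unfolding coset_def using that
    by (intro lattice_coset_eq[OF L] ker) (simp_all add: imageI inv_into_into f_inv_into_f)
  then have "lattice_cosets d L = (\<lambda>y. coset (inv_into (ZV d) f y)) ` f ` ZV d"
    unfolding lattice_cosets_def image_image coset_def[symmetric] by (rule image_cong[OF refl])
  then show "finite (lattice_cosets d L)" "lattice_index d L \<le> card (f ` ZV d)"
    unfolding lattice_index_def using fin by (simp_all add: card_image_le)
qed

lemma card_image_le_lattice_index_mult:
  assumes L: "finite_index_sublattice d L" and fin: "finite (f ` L)"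
    and hom: "\<And>v x. v \<in> ZV d \<Longrightarrow> x \<in> L \<Longrightarrow> f (\<lambda>j. v j + x j) = h (f v) (f x)"
  shows "card (f ` ZV d) \<le> lattice_index d L * card (f ` L)"
proof -
  have LZ: "L \<subseteq> ZV d" "(\<lambda>_. 0) \<in> L" and finC: "finite (lattice_cosets d L)"
    using L unfolding finite_index_sublattice_def sublattice_def by auto
  have cover: "ZV d = \<Union>(lattice_cosets d L)"
  proof
    show "ZV d \<subseteq> \<Union>(lattice_cosets d L)"
    proof
      fix v assume "v \<in> ZV d"
      moreover have "v \<in> (\<lambda>x j. v j + x j) ` L"
        using LZ(2) by (auto intro!: image_eqI[where x = "\<lambda>_. 0"])
      ultimately show "v \<in> \<Union>(lattice_cosets d L)"
        unfolding lattice_cosets_def by blast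
    qed
    show "\<Union>(lattice_cosets d L) \<subseteq> ZV d"
      using LZ(1) unfolding lattice_cosets_def ZV_def by auto
  qed
  have "card (f ` ZV d) \<le> (\<Sum>C \<in> lattice_cosets d L. card (f ` C))"
    unfolding cover image_Union by (rule card_UN_le[OF finC])
  also have "\<dots> \<le> lattice_index d L * card (f ` L)"
  proof -
    have "card (f ` C) \<le> card (f ` L)" if coset: "C \<in> lattice_cosets d L" for C
    proof -
      obtain v where v: "v \<in> ZV d" and C: "C = (\<lambda>x j. v j + x j) ` L"
        using coset unfolding lattice_cosets_def by blast
      have "f ` C = (\<lambda>x. h (f v) (f x)) ` L"
        unfolding C image_image by (intro image_cong) (simp_all add: hom v)
      also have "\<dots> = h (f v) ` f ` L"
        by (simp add: image_image)
      finally show ?thesis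
        using fin by (simp add: card_image_le)
    qed
    then have "(\<Sum>C \<in> lattice_cosets d L. card (f ` C))
        \<le> of_nat (card (lattice_cosets d L)) * card (f ` L)"
      by (rule sum_bounded_above)
    then show ?thesis
      unfolding lattice_index_def by simp
  qed
  finally show ?thesis .
qed

lemma dual_basis_solve:
  assumes "dual_basis d E" "u \<in> ZV d"
  obtains y where "y \<in> ZV d" "\<And>i. i < d \<Longrightarrow> lin_fun d E i y = u i"
proof -
  have "u \<in> (\<lambda>x i. if i < d then lin_fun d E i x else 0) ` ZV d"
    using assms unfolding dual_basis_def bij_betw_def by simp
  then obtain y where y: "y \<in> ZV d" "u = (\<lambda>i. if i < d then lin_fun d E i y else 0)"
    by blast
  show ?thesis
    using y by (intro that[of y]) auto
qed

lemma lin_fun_zero: "lin_fun d E i (\<lambda>_. 0) = 0"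
  by (simp add: lin_fun_def)

lemma lin_fun_add: "lin_fun d E i (\<lambda>j. x j + y j) = lin_fun d E i x + lin_fun d E i y"
  by (simp add: lin_fun_def algebra_simps sum.distrib)

lemma lin_fun_diff: "lin_fun d E i (\<lambda>j. x j - y j) = lin_fun d E i x - lin_fun d E i y"
  by (simp add: lin_fun_def algebra_simps sum_subtractf)

lemma lin_fun_minus: "lin_fun d E i (\<lambda>j. - x j) = - lin_fun d E i x"
  by (simp add: lin_fun_def sum_negf)

definition residue_map ::
    "nat \<Rightarrow> (nat \<Rightarrow> nat \<Rightarrow> int) \<Rightarrow> nat \<Rightarrow> (nat \<Rightarrow> nat) \<Rightarrow> nat \<Rightarrow> (nat \<Rightarrow> int) \<Rightarrow> nat \<Rightarrow> int" where
  "residue_map d E r m s x = (\<lambda>i. if i < r then lin_fun d E (i + s) x mod int (m i) else 0)"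

lemma residue_map_add:
  "residue_map d E r m s (\<lambda>j. x j + y j)
    = residue_add m (residue_map d E r m s x) (residue_map d E r m s y)"
  by (auto simp: residue_map_def residue_add_def lin_fun_add mod_add_eq fun_eq_iff)

lemma residue_map_diff:
  "residue_map d E r m s (\<lambda>j. x j - y j)
    = residue_diff m (residue_map d E r m s x) (residue_map d E r m s y)"
  by (auto simp: residue_map_def residue_diff_def lin_fun_diff mod_diff_eq fun_eq_iff)

lemma residue_map_in_residues:
  "(\<And>i. i < r \<Longrightarrow> 0 < m i) \<Longrightarrow> residue_map d E r m s x \<in> residues r m"
  by (simp add: residue_map_def residues_iff)

lemma residue_subgroup_residue_map:
  assumes "\<And>i. i < r \<Longrightarrow> 0 < m i"
    and "\<And>x y. x \<in> L \<Longrightarrow> y \<in> L \<Longrightarrow> (\<lambda>j. x j - y j) \<in> L"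
  shows "residue_subgroup r m (residue_map d E r m s ` L)"
  unfolding residue_subgroup_def
  using assms by (auto simp: residue_map_in_residues residue_map_diff[symmetric])

lemma card_residue_pairs_le:
  fixes E :: "nat \<Rightarrow> nat \<Rightarrow> int"
  assumes m: "\<And>i. i < r \<Longrightarrow> 0 < m i" and L: "sublattice d L"
  defines "\<psi> \<equiv> residue_map d E r m"
  shows "card ((\<lambda>x. (\<psi> s x, \<psi> t x)) ` L) \<le> card (\<psi> s ` L) * card (\<psi> t ` {x \<in> L. \<psi> s x = (\<lambda>_. 0)})"
proof -
  have res: "\<psi> s' x \<in> residues r m" for s' x
    unfolding \<psi>_def using m by (rule residue_map_in_residues)
  have "card ((\<lambda>x. (\<psi> s x, \<psi> t x)) ` L) \<le>
      card (fst ` (\<lambda>x. (\<psi> s x, \<psi> t x)) ` L) * card (\<psi> t ` {x \<in> L. \<psi> s x = (\<lambda>_. 0)})"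
  proof (rule card_le_card_image_mult[where \<delta> = "\<lambda>p q. residue_diff m (snd p) (snd q)"])
    show "finite ((\<lambda>x. (\<psi> s x, \<psi> t x)) ` L)"
      by (rule finite_subset[of _ "residues r m \<times> residues r m"]) (auto simp: res finite_residues)
    show "finite (\<psi> t ` {x \<in> L. \<psi> s x = (\<lambda>_. 0)})"
      by (rule finite_subset[OF _ finite_residues[of r m]]) (auto simp: res)
  next
    fix p q assume "p \<in> (\<lambda>x. (\<psi> s x, \<psi> t x)) ` L" "q \<in> (\<lambda>x. (\<psi> s x, \<psi> t x)) ` L" "fst p = fst q"
    then obtain x y where xy: "x \<in> L" "y \<in> L" "p = (\<psi> s x, \<psi> t x)" "q = (\<psi> s y, \<psi> t y)"
      and eq: "\<psi> s x = \<psi> s y"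
      by auto
    have "(\<lambda>j. x j - y j) \<in> {x \<in> L. \<psi> s x = (\<lambda>_. 0)}"
      using sublattice_diff[OF L xy(1,2)] eq unfolding \<psi>_def
      by (simp add: residue_map_diff residue_diff_self)
    moreover have "residue_diff m (snd p) (snd q) = \<psi> t (\<lambda>j. x j - y j)"
      unfolding xy \<psi>_def by (simp add: residue_map_diff)
    ultimately show "residue_diff m (snd p) (snd q) \<in> \<psi> t ` {x \<in> L. \<psi> s x = (\<lambda>_. 0)}"
      by blast
  next
    fix q
    show "inj_on (\<lambda>p. residue_diff m (snd p) (snd q)) {p \<in> (\<lambda>x. (\<psi> s x, \<psi> t x)) ` L. fst p = fst q}"
    proof (rule inj_onI)
      fix p p' assume p: "p \<in> {p \<in> (\<lambda>x. (\<psi> s x, \<psi> t x)) ` L. fst p = fst q}"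
        and p': "p' \<in> {p \<in> (\<lambda>x. (\<psi> s x, \<psi> t x)) ` L. fst p = fst q}"
        and eq: "residue_diff m (snd p) (snd q) = residue_diff m (snd p') (snd q)"
      have "snd p \<in> residues r m" "snd p' \<in> residues r m"
        using p p' res by auto
      then have "snd p = snd p'"
        using eq inj_on_eq_iff[OF inj_on_residue_diff[of m "snd q" r], of "snd p" "snd p'"] by simp
      then show "p = p'"
        using p p' by (simp add: prod_eq_iff)
    qed
  qed
  then show ?thesis
    by (simp add: image_image)
qed

lemma residue_pairs_surj:
  assumes E: "dual_basis d E" and "r \<le> g" "g + r \<le> d"
  shows "residues r m \<times> residues r m \<subseteq> (\<lambda>x. (residue_map d E r m 0 x, residue_map d E r m g x)) ` ZV d"
proof clarify
  fix \<alpha> \<beta> assume \<alpha>: "\<alpha> \<in> residues r m" and \<beta>: "\<beta> \<in> residues r m"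
  define u where "u j = (if j < r then \<alpha> j else if g \<le> j \<and> j < g + r then \<beta> (j - g) else 0)" for j
  have "u \<in> ZV d"
    using assms unfolding u_def ZV_def by auto
  then obtain y where "y \<in> ZV d" and y: "\<And>j. j < d \<Longrightarrow> lin_fun d E j y = u j"
    using dual_basis_solve[OF E] by blast
  have "residue_map d E r m 0 y = \<alpha>" "residue_map d E r m g y = \<beta>"
    using \<alpha> \<beta> assms(2,3)
    by (auto simp: fun_eq_iff residue_map_def residues_iff y u_def mod_pos_pos_trivial)
  then show "(\<alpha>, \<beta>) \<in> (\<lambda>x. (residue_map d E r m 0 x, residue_map d E r m g x)) ` ZV d"
    using \<open>y \<in> ZV d\<close> by force
qed

definition wedge_form ::
    "nat \<Rightarrow> nat \<Rightarrow> (nat \<Rightarrow> nat \<Rightarrow> int) \<Rightarrow> nat \<Rightarrow> (nat \<Rightarrow> int) \<Rightarrow> (nat \<Rightarrow> int) \<Rightarrow> (nat \<Rightarrow> int) \<Rightarrow> int" where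
  "wedge_form d g E r a x y = (\<Sum>i<r. a i * (lin_fun d E i x * lin_fun d E (i + g) y
                                            - lin_fun d E (i + g) x * lin_fun d E i y))"

lemma cong_mult_mod:
  fixes a m n u :: int
  assumes "n dvd a * m"
  shows "[a * (u mod m) = a * u] (mod n)"
proof -
  have "a * (u mod m) = a * u - (a * m) * (u div m)"
    by (simp add: minus_mult_div_eq_mod[symmetric] algebra_simps)
  then show ?thesis
    using assms by (simp add: cong_iff_dvd_diff dvd_mult2)
qed

lemma wedge_form_cong_residue_pairing:
  assumes "\<And>i. i < r \<Longrightarrow> int n dvd a i * int (m i)"
    and "residue_map d E r m 0 y = (\<lambda>_. 0)"
  shows "[(\<Sum>i<r. a i * residue_map d E r m 0 x i * residue_map d E r m g y i)
          = wedge_form d g E r a x y] (mod int n)"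
  unfolding wedge_form_def
proof (rule cong_sum)
  fix i assume "i \<in> {..<r}"
  then have i: "i < r" by simp
  have n: "int n dvd a i * int (m i)"
    using assms(1) i .
  have "int (m i) dvd lin_fun d E i y"
    using fun_cong[OF assms(2), of i] i by (simp add: residue_map_def dvd_eq_mod_eq_0)
  then obtain z where z: "lin_fun d E i y = int (m i) * z" ..
  define u v w
    where "u = lin_fun d E i x" and "v = lin_fun d E (i + g) y" and "w = lin_fun d E (i + g) x"
  have "[a i * (u mod int (m i)) * (v mod int (m i)) = a i * u * (v mod int (m i))] (mod int n)"
    using cong_mult_mod[OF n] by (rule cong_scalar_right)
  also have "[a i * u * (v mod int (m i)) = a i * u * v] (mod int n)"
    using cong_scalar_right[OF cong_mult_mod[OF n], of v u] by (simp add: ac_simps)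
  also have "[a i * u * v = a i * u * v - (a i * int (m i)) * (w * z)] (mod int n)"
    using n by (simp add: cong_iff_dvd_diff dvd_mult2)
  also have "a i * u * v - (a i * int (m i)) * (w * z) = a i * (u * v - w * (int (m i) * z))"
    by (simp add: algebra_simps)
  finally show "[a i * residue_map d E r m 0 x i * residue_map d E r m g y i
      = a i * (lin_fun d E i x * lin_fun d E (i + g) y - lin_fun d E (i + g) x * lin_fun d E i y)] (mod int n)"
    using i by (simp add: residue_map_def u_def v_def w_def z)
qed

definition congruence_sublattice ::
    "nat \<Rightarrow> (nat \<Rightarrow> nat \<Rightarrow> int) \<Rightarrow> nat \<Rightarrow> (nat \<Rightarrow> nat) \<Rightarrow> (nat \<Rightarrow> int) set" where
  "congruence_sublattice d E r m = {x \<in> ZV d. \<forall>i<r. int (m i) dvd lin_fun d E i x}"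

lemma congruence_sublattice_finite_index:
  assumes "\<And>i. i < r \<Longrightarrow> 0 < m i"
  shows "finite_index_sublattice d (congruence_sublattice d E r m)"
    and "lattice_index d (congruence_sublattice d E r m) \<le> (\<Prod>i<r. m i)"
proof -
  have L: "sublattice d (congruence_sublattice d E r m)"
    unfolding sublattice_def congruence_sublattice_def ZV_def
    by (auto simp: lin_fun_zero lin_fun_add lin_fun_minus)
  have ker: "(\<lambda>j. v j - w j) \<in> congruence_sublattice d E r m"
    if "v \<in> ZV d" "w \<in> ZV d" and eq: "residue_map d E r m 0 v = residue_map d E r m 0 w" for v w
  proof -
    have "int (m i) dvd lin_fun d E i v - lin_fun d E i w" if "i < r" for i
      using fun_cong[OF eq, of i] that by (simp add: residue_map_def mod_eq_dvd_iff)
    then show ?thesis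
      using \<open>v \<in> ZV d\<close> \<open>w \<in> ZV d\<close> unfolding congruence_sublattice_def ZV_def
      by (simp add: lin_fun_diff)
  qed
  have img: "residue_map d E r m 0 ` ZV d \<subseteq> residues r m"
    using residue_map_in_residues[of r m, OF assms] by blast
  have fin: "finite (residue_map d E r m 0 ` ZV d)"
    using finite_subset[OF img finite_residues] .
  note index = lattice_index_le_card_image[OF L fin ker]
  show "finite_index_sublattice d (congruence_sublattice d E r m)"
    unfolding finite_index_sublattice_def using L index(1) by (rule conjI)
  have "lattice_index d (congruence_sublattice d E r m) \<le> card (residue_map d E r m 0 ` ZV d)"
    by (rule index(2))
  also have "\<dots> \<le> card (residues r m)"
    by (rule card_mono[OF finite_residues img])
  finally show "lattice_index d (congruence_sublattice d E r m) \<le> (\<Prod>i<r. m i)"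
    by (simp only: card_residues)
qed

lemma wedge_form_congruence_sublattice:
  assumes "\<And>i. i < r \<Longrightarrow> int n dvd a i * int (m i)"
    and "x \<in> congruence_sublattice d E r m" "y \<in> congruence_sublattice d E r m"
  shows "[wedge_form d g E r a x y = 0] (mod int n)"
  unfolding wedge_form_def cong_0_iff
proof (rule dvd_sum)
  fix i assume "i \<in> {..<r}"
  then have "i < r" and "int (m i) dvd lin_fun d E i x" "int (m i) dvd lin_fun d E i y"
    using assms(2,3) unfolding congruence_sublattice_def by auto
  obtain p where "lin_fun d E i x = int (m i) * p"
    using \<open>int (m i) dvd lin_fun d E i x\<close> ..
  moreover obtain q where "lin_fun d E i y = int (m i) * q"
    using \<open>int (m i) dvd lin_fun d E i y\<close> ..
  ultimately have "a i * (lin_fun d E i x * lin_fun d E (i + g) y - lin_fun d E (i + g) x * lin_fun d E i y)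
      = (a i * int (m i)) * (p * lin_fun d E (i + g) y - lin_fun d E (i + g) x * q)"
    by (simp add: algebra_simps)
  also have "int n dvd \<dots>"
    using assms(1)[OF \<open>i < r\<close>] by (rule dvd_mult2)
  finally show "int n dvd a i * (lin_fun d E i x * lin_fun d E (i + g) y
      - lin_fun d E (i + g) x * lin_fun d E i y)" .
qed

lemma card_isotropic_residue_pairs_le:
  assumes m: "\<And>i. i < r \<Longrightarrow> 0 < m i"
    and ann: "\<And>i z. i < r \<Longrightarrow> int n dvd a i * z \<longleftrightarrow> int (m i) dvd z"
    and L: "sublattice d L"
    and iso: "\<forall>x\<in>L. \<forall>y\<in>L. [wedge_form d g E r a x y = 0] (mod int n)"
  shows "card ((\<lambda>x. (residue_map d E r m 0 x, residue_map d E r m g x)) ` L) \<le> (\<Prod>i<r. m i)"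
proof -
  define \<psi> where "\<psi> = residue_map d E r m"
  define K where "K = {x \<in> L. \<psi> 0 x = (\<lambda>_. 0)}"
  define S where "S = \<psi> 0 ` L"
  define T where "T = \<psi> g ` K"
  have "(\<lambda>j. x j - y j) \<in> K" if "x \<in> K" "y \<in> K" for x y
    using that sublattice_diff[OF L] unfolding K_def \<psi>_def
    by (simp add: residue_map_diff residue_diff_self)
  then have subgroups: "residue_subgroup r m S" "residue_subgroup r m T"
    unfolding S_def T_def \<psi>_def using m sublattice_diff[OF L]
    by (simp_all add: residue_subgroup_residue_map)
  have "int n dvd (\<Sum>i<r. a i * \<alpha> i * \<beta> i)" if \<alpha>\<beta>: "\<alpha> \<in> S" "\<beta> \<in> T" for \<alpha> \<beta>
  proof -
    obtain x y where xy: "x \<in> L" "y \<in> L" "\<psi> 0 y = (\<lambda>_. 0)" "\<alpha> = \<psi> 0 x" "\<beta> = \<psi> g y"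
      using \<alpha>\<beta> unfolding S_def T_def K_def by blast
    have "[(\<Sum>i<r. a i * \<alpha> i * \<beta> i) = wedge_form d g E r a x y] (mod int n)"
      unfolding xy \<psi>_def using xy(3) ann
      by (intro wedge_form_cong_residue_pairing) (simp_all add: \<psi>_def)
    also have "[wedge_form d g E r a x y = 0] (mod int n)"
      using iso xy(1,2) by blast
    finally show ?thesis
      by (simp add: cong_0_iff)
  qed
  then have "card S * card T \<le> (\<Prod>i<r. m i)"
    using subgroups ann by (intro card_mult_card_le_if_orthogonal) auto
  moreover have "card ((\<lambda>x. (\<psi> 0 x, \<psi> g x)) ` L) \<le> card S * card T"
    unfolding S_def T_def K_def \<psi>_def using m L by (rule card_residue_pairs_le)
  ultimately show ?thesis
    unfolding \<psi>_def by simp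
qed

lemma prod_le_lattice_index_if_isotropic:
  assumes m: "\<And>i. i < r \<Longrightarrow> 0 < m i"
    and ann: "\<And>i z. i < r \<Longrightarrow> int n dvd a i * z \<longleftrightarrow> int (m i) dvd z"
    and E: "dual_basis d E" and "r \<le> g" "g + r \<le> d"
    and L: "finite_index_sublattice d L"
    and iso: "\<forall>x\<in>L. \<forall>y\<in>L. [wedge_form d g E r a x y = 0] (mod int n)"
  shows "(\<Prod>i<r. m i) \<le> lattice_index d L"
proof -
  define P where "P = (\<Prod>i<r. m i)"
  define \<phi> where "\<phi> = (\<lambda>x. (residue_map d E r m 0 x, residue_map d E r m g x))"
  have fin: "finite (\<phi> ` A)" for A
    by (rule finite_subset[of _ "residues r m \<times> residues r m"])
      (auto simp: \<phi>_def residue_map_in_residues m finite_residues)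
  have "P * P = card (residues r m \<times> residues r m)"
    unfolding P_def by (simp add: card_cartesian_product card_residues)
  also have "\<dots> \<le> card (\<phi> ` ZV d)"
    unfolding \<phi>_def by (rule card_mono[OF fin[unfolded \<phi>_def] residue_pairs_surj[OF E assms(4,5)]])
  also have "\<dots> \<le> lattice_index d L * card (\<phi> ` L)"
    by (rule card_image_le_lattice_index_mult[OF L fin,
          where h = "\<lambda>p q. (residue_add m (fst p) (fst q), residue_add m (snd p) (snd q))"])
      (simp add: \<phi>_def residue_map_add)
  also have "\<dots> \<le> lattice_index d L * P"
    using card_isotropic_residue_pairs_le[OF m ann _ iso] L
    unfolding \<phi>_def P_def finite_index_sublattice_def by simp
  finally have "P * P \<le> lattice_index d L * P" .
  moreover have "P > 0"
    unfolding P_def using m by (simp add: prod_pos)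
  ultimately show ?thesis
    unfolding P_def by simp
qed

theorem lemma3p3:
  fixes g r n :: nat and a :: "nat \<Rightarrow> int" and E :: "nat \<Rightarrow> nat \<Rightarrow> int"
  assumes "n > 0"
    and "dual_basis (2 * g) E"
    and "r \<le> g"
    and "\<forall>i<r. \<not> [a i = 0] (mod int n)"
  shows "Ann_form n (2 * g)
           (\<lambda>x y. \<Sum>i<r. a i * (lin_fun (2 * g) E i x * lin_fun (2 * g) E (i + g) y
                               - lin_fun (2 * g) E (i + g) x * lin_fun (2 * g) E i y))
         = (\<Prod>i<r. Ann_Z n (a i))"
proof -
  define m where "m i = Ann_Z n (a i)" for i
  have m: "0 < m i" "int n dvd a i * z \<longleftrightarrow> int (m i) dvd z" for i z
    unfolding m_def using assms(1) by (simp_all add: Ann_Z_pos_dvd Ann_Z_dvd_iff)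
  have form: "(\<lambda>x y. \<Sum>i<r. a i * (lin_fun (2 * g) E i x * lin_fun (2 * g) E (i + g) y
                               - lin_fun (2 * g) E (i + g) x * lin_fun (2 * g) E i y))
      = wedge_form (2 * g) g E r a"
    by (simp add: fun_eq_iff wedge_form_def)
  define L where "L = congruence_sublattice (2 * g) E r m"
  have L: "finite_index_sublattice (2 * g) L" "lattice_index (2 * g) L \<le> (\<Prod>i<r. m i)"
    unfolding L_def using m(1) by (rule congruence_sublattice_finite_index)+
  have iso: "\<forall>x\<in>L. \<forall>y\<in>L. [wedge_form (2 * g) g E r a x y = 0] (mod int n)"
    unfolding L_def using wedge_form_congruence_sublattice[of r n a m] m by simp
  have lower: "(\<Prod>i<r. m i) \<le> lattice_index (2 * g) L'"
    if "finite_index_sublattice (2 * g) L'"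
      and "\<forall>x\<in>L'. \<forall>y\<in>L'. [wedge_form (2 * g) g E r a x y = 0] (mod int n)" for L'
    using prod_le_lattice_index_if_isotropic[OF _ _ assms(2,3) _ that] m assms(3) by simp
  show ?thesis
    unfolding form Ann_form_def m_def[symmetric]
  proof (rule Least_equality)
    show "\<exists>L. finite_index_sublattice (2 * g) L \<and> lattice_index (2 * g) L = (\<Prod>i<r. m i) \<and>
        (\<forall>x\<in>L. \<forall>y\<in>L. [wedge_form (2 * g) g E r a x y = 0] (mod int n))"
      using L iso lower[OF L(1) iso] by (intro exI[of _ L]) simp
  qed (use lower in blast)
qed

end
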